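(* Let $\mathcal R$ be a partial $Z$-regulus and let $E\in\mathcal R$. Then the assignment $L\mapsto L\cap E$ is a bijection from the set of directrices of $\mathcal R$ onto the set of points of $E$. Consequently, each point of $E$ lies on a unique directrix of $\mathcal R$.
   Context: $K$ is a (not necessarily commutative) field with centre $Z$, and $V$ is a left vector space over $K$ of arbitrary (possibly infinite) dimension with $\dim V>2$. $\mathcal G:=\{X\le V\mid X\cong V/X\}$, assumed nonempty. Points are $1$-dimensional and lines are $2$-dimensional subspaces of $V$; two subspaces meet if they have a common point. Two elements $X,Y\in\mathcal G$ are distant if $V=X\oplus Y$. A partial $Z$-regulus is a subset $\mathcal R\subseteq\mathcal G$ such that (R1) the elements of $\mathcal R$ are mutually distant and $|\mathcal R|\ge 3$, and (R2) whenever a line meets three mutually distinct elements of $\mathcal R$, it meets all elements of $\mathcal R$. A directrix of $\mathcal R$ is a line meeting all elements of $\mathcal R$. *)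

theory Defs
  imports Main
begin

text \<open>The vector space V is the whole carrier type 'v,
with scalar multiplication sm (acting on the left).\<close>

definition left_vs :: "('k::division_ring \<Rightarrow> 'v::ab_group_add \<Rightarrow> 'v) \<Rightarrow> bool" where
  "left_vs sm \<longleftrightarrow>
     (\<forall>a x y. sm a (x + y) = sm a x + sm a y) \<and>
     (\<forall>a b x. sm (a + b) x = sm a x + sm b x) \<and>
     (\<forall>a b x. sm (a * b) x = sm a (sm b x)) \<and>
     (\<forall>x. sm 1 x = x)"

definition lsubspace :: "('k::division_ring \<Rightarrow> 'v::ab_group_add \<Rightarrow> 'v) \<Rightarrow> 'v set \<Rightarrow> bool" where
  "lsubspace sm X \<longleftrightarrow> 0 \<in> X \<and> (\<forall>x\<in>X. \<forall>y\<in>X. x + y \<in> X) \<and> (\<forall>a. \<forall>x\<in>X. sm a x \<in> X)"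

definition lspan :: "('k::division_ring \<Rightarrow> 'v::ab_group_add \<Rightarrow> 'v) \<Rightarrow> 'v set \<Rightarrow> 'v set" where
  "lspan sm S = \<Inter>{X. lsubspace sm X \<and> S \<subseteq> X}"

definition is_point :: "('k::division_ring \<Rightarrow> 'v::ab_group_add \<Rightarrow> 'v) \<Rightarrow> 'v set \<Rightarrow> bool" where
  "is_point sm P \<longleftrightarrow> (\<exists>v. v \<noteq> 0 \<and> P = lspan sm {v})"

definition is_line :: "('k::division_ring \<Rightarrow> 'v::ab_group_add \<Rightarrow> 'v) \<Rightarrow> 'v set \<Rightarrow> bool" where
  "is_line sm L \<longleftrightarrow> (\<exists>u w. u \<noteq> 0 \<and> w \<notin> lspan sm {u} \<and> L = lspan sm {u, w})"

definition dim_gt_2 :: "('k::division_ring \<Rightarrow> 'v::ab_group_add \<Rightarrow> 'v) \<Rightarrow> bool" where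
  "dim_gt_2 sm \<longleftrightarrow> (\<exists>u v w. u \<noteq> 0 \<and> v \<notin> lspan sm {u} \<and> w \<notin> lspan sm {u, v})"

definition lin_map :: "('k::division_ring \<Rightarrow> 'v::ab_group_add \<Rightarrow> 'v) \<Rightarrow> ('v \<Rightarrow> 'v) \<Rightarrow> bool" where
  "lin_map sm f \<longleftrightarrow> (\<forall>x y. f (x + y) = f x + f y) \<and> (\<forall>a x. f (sm a x) = sm a (f x))"

text \<open>X \<cong> V/X, expressed via the first isomorphism theorem: there is a linear
map V \<rightarrow> V with image X and kernel X (so V/X \<cong> image = X).\<close>
definition iso_quot :: "('k::division_ring \<Rightarrow> 'v::ab_group_add \<Rightarrow> 'v) \<Rightarrow> 'v set \<Rightarrow> bool" where
  "iso_quot sm X \<longleftrightarrow> (\<exists>g. lin_map sm g \<and> range g = X \<and> {v. g v = 0} = X)"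

definition GG :: "('k::division_ring \<Rightarrow> 'v::ab_group_add \<Rightarrow> 'v) \<Rightarrow> 'v set set" where
  "GG sm = {X. lsubspace sm X \<and> iso_quot sm X}"

definition meets :: "('k::division_ring \<Rightarrow> 'v::ab_group_add \<Rightarrow> 'v) \<Rightarrow> 'v set \<Rightarrow> 'v set \<Rightarrow> bool" where
  "meets sm X Y \<longleftrightarrow> (\<exists>P. is_point sm P \<and> P \<subseteq> X \<and> P \<subseteq> Y)"

definition distant :: "'v::ab_group_add set \<Rightarrow> 'v set \<Rightarrow> bool" where
  "distant X Y \<longleftrightarrow> X \<inter> Y = {0} \<and> (\<forall>v. \<exists>x\<in>X. \<exists>y\<in>Y. v = x + y)"

definition partial_regulus :: "('k::division_ring \<Rightarrow> 'v::ab_group_add \<Rightarrow> 'v) \<Rightarrow> 'v set set \<Rightarrow> bool" where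
  "partial_regulus sm R \<longleftrightarrow>
     R \<subseteq> GG sm \<and>
     (\<forall>X\<in>R. \<forall>Y\<in>R. X \<noteq> Y \<longrightarrow> distant X Y) \<and>
     (\<exists>A B C. A \<in> R \<and> B \<in> R \<and> C \<in> R \<and> A \<noteq> B \<and> A \<noteq> C \<and> B \<noteq> C) \<and>
     (\<forall>L. is_line sm L \<longrightarrow>
        (\<forall>A\<in>R. \<forall>B\<in>R. \<forall>C\<in>R. A \<noteq> B \<and> A \<noteq> C \<and> B \<noteq> C \<and>
            meets sm L A \<and> meets sm L B \<and> meets sm L C \<longrightarrow> (\<forall>X\<in>R. meets sm L X)))"

definition directrix :: "('k::division_ring \<Rightarrow> 'v::ab_group_add \<Rightarrow> 'v) \<Rightarrow> 'v set set \<Rightarrow> 'v set \<Rightarrow> bool" where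
  "directrix sm R L \<longleftrightarrow> is_line sm L \<and> (\<forall>X\<in>R. meets sm L X)"

end

theory Submission imports Defs begin

text \<open>Pick two further members F, G of the regulus besides E.  Since F and G are
complementary, every nonzero p \<in> E splits uniquely as p = f + g with f \<in> F, g \<in> G,
and a line through p meets both F and G exactly when it is the span of f and g.
So each point of E lies on exactly one line meeting E, F, G, and by (R2) these
lines are precisely the directrices.  A directrix is not contained in E (it meets F),
hence it meets E in a single point.\<close>

lemma lspan_lsubspace: "lsubspace sm (lspan sm S)"
  unfolding lspan_def lsubspace_def by auto

lemma lspan_superset: "S \<subseteq> lspan sm S"
  unfolding lspan_def by auto

lemma lspan_least: "lsubspace sm X \<Longrightarrow> S \<subseteq> X \<Longrightarrow> lspan sm S \<subseteq> X"
  unfolding lspan_def by auto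

lemma lspan_singleton_subset_iff: "lsubspace sm X \<Longrightarrow> lspan sm {v} \<subseteq> X \<longleftrightarrow> v \<in> X"
  using lspan_least[of sm X "{v}"] lspan_superset[of "{v}" sm] by blast

lemma not_in_lspan_singleton:
  "lsubspace sm F \<Longrightarrow> f \<in> F \<Longrightarrow> g \<notin> F \<Longrightarrow> g \<notin> lspan sm {f}"
  using lspan_singleton_subset_iff by blast

lemma is_line_lsubspace: "is_line sm L \<Longrightarrow> lsubspace sm L"
  unfolding is_line_def using lspan_lsubspace by blast

lemma lsubspace_smult: "lsubspace sm X \<Longrightarrow> x \<in> X \<Longrightarrow> sm a x \<in> X"
  unfolding lsubspace_def by blast

lemma lsubspace_add: "lsubspace sm X \<Longrightarrow> x \<in> X \<Longrightarrow> y \<in> X \<Longrightarrow> x + y \<in> X"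
  unfolding lsubspace_def by blast

lemma meets_iff:
  "lsubspace sm L \<Longrightarrow> lsubspace sm X \<Longrightarrow> meets sm L X \<longleftrightarrow> (\<exists>v. v \<noteq> 0 \<and> v \<in> L \<and> v \<in> X)"
  unfolding meets_def is_point_def using lspan_singleton_subset_iff by blast

lemma is_point_subset_iff:
  "lsubspace sm E \<Longrightarrow> is_point sm P \<and> P \<subseteq> E \<longleftrightarrow> (\<exists>p. p \<noteq> 0 \<and> p \<in> E \<and> P = lspan sm {p})"
  unfolding is_point_def using lspan_singleton_subset_iff by blast

lemma partial_regulus_lsubspace: "partial_regulus sm R \<Longrightarrow> X \<in> R \<Longrightarrow> lsubspace sm X"
  by (auto simp: partial_regulus_def GG_def)

lemma partial_regulus_distant:
  "partial_regulus sm R \<Longrightarrow> X \<in> R \<Longrightarrow> Y \<in> R \<Longrightarrow> X \<noteq> Y \<Longrightarrow> distant X Y"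
  by (simp add: partial_regulus_def)

lemma partial_regulus_obtain_two_others:
  assumes "partial_regulus sm R" "E \<in> R"
  obtains F G where "F \<in> R" "G \<in> R" "F \<noteq> E" "G \<noteq> E" "F \<noteq> G"
proof -
  obtain A B C where ABC: "A \<in> R" "B \<in> R" "C \<in> R" "A \<noteq> B" "A \<noteq> C" "B \<noteq> C"
    using assms(1)[unfolded partial_regulus_def, THEN conjunct2, THEN conjunct2, THEN conjunct1]
    by blast
  consider "A = E" | "B = E" | "A \<noteq> E" "B \<noteq> E" by blast
  then show ?thesis
  proof cases
    case 1
    then show ?thesis using that[of B C] ABC by simp
  next
    case 2
    then show ?thesis using that[of A C] ABC by simp
  next
    case 3
    then show ?thesis using that[of A B] ABC by simp
  qed
qed

lemma directrix_iff_meets_three: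
  assumes "partial_regulus sm R" "E \<in> R" "F \<in> R" "G \<in> R" "E \<noteq> F" "E \<noteq> G" "F \<noteq> G"
  shows "directrix sm R L \<longleftrightarrow> is_line sm L \<and> meets sm L E \<and> meets sm L F \<and> meets sm L G"
proof
  assume "is_line sm L \<and> meets sm L E \<and> meets sm L F \<and> meets sm L G"
  then show "directrix sm R L"
    using assms(1)[unfolded partial_regulus_def, THEN conjunct2, THEN conjunct2, THEN conjunct2,
        rule_format, of L E F G] assms(2-7)
    unfolding directrix_def by blast
qed (use assms(2-4) in \<open>auto simp: directrix_def\<close>)

locale left_vector_space =
  fixes sm :: "'k::division_ring \<Rightarrow> 'v::ab_group_add \<Rightarrow> 'v"
  assumes left_vs: "left_vs sm"
begin

lemma smult_add_right: "sm a (x + y) = sm a x + sm a y"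
  and smult_add_left: "sm (a + b) x = sm a x + sm b x"
  and smult_assoc: "sm (a * b) x = sm a (sm b x)"
  and smult_one: "sm 1 x = x"
  using left_vs by (auto simp: left_vs_def)

lemma smult_zero_left [simp]: "sm 0 x = 0"
  using smult_add_left[of 0 0 x] by simp

lemma smult_minus_left: "sm (- a) x = - sm a x"
  using smult_add_left[of a "- a" x] by (simp add: add_eq_0_iff)

lemma smult_inverse_cancel: "a \<noteq> 0 \<Longrightarrow> sm (inverse a) (sm a x) = x"
  by (simp flip: smult_assoc add: smult_one)

lemma lsubspace_diff: "lsubspace sm X \<Longrightarrow> x \<in> X \<Longrightarrow> y \<in> X \<Longrightarrow> x - y \<in> X"
  using lsubspace_smult[of sm X y "- 1"] lsubspace_add[of sm X x "- y"]
  by (simp add: smult_minus_left smult_one)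

lemma direct_sum_decomposition_unique:
  assumes F: "lsubspace sm F" and G: "lsubspace sm G" and FG: "F \<inter> G = {0}"
    and "f \<in> F" "f' \<in> F" "g \<in> G" "g' \<in> G" and eq: "f + g = f' + g'"
  shows "f = f' \<and> g = g'"
proof -
  have "f - f' = g' - g" using eq by (simp add: algebra_simps)
  moreover have "f - f' \<in> F" "g' - g \<in> G" using assms(4-7) F G by (simp_all add: lsubspace_diff)
  ultimately have "f - f' = 0" using FG by (metis IntI singletonD)
  then show ?thesis using eq by simp
qed

lemma lspan_singleton: "lspan sm {v} = range (\<lambda>a. sm a v)"
proof
  have "lsubspace sm (range (\<lambda>a. sm a v))"
    unfolding lsubspace_def
  proof (intro conjI ballI allI)
    show "0 \<in> range (\<lambda>a. sm a v)" using smult_zero_left by (metis rangeI)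
  next
    fix x y assume "x \<in> range (\<lambda>a. sm a v)" "y \<in> range (\<lambda>a. sm a v)"
    then obtain a b where "x + y = sm (a + b) v" by (auto simp: smult_add_left)
    then show "x + y \<in> range (\<lambda>a. sm a v)" by auto
  next
    fix c x assume "x \<in> range (\<lambda>a. sm a v)"
    then obtain a where "sm c x = sm (c * a) v" by (auto simp: smult_assoc)
    then show "sm c x \<in> range (\<lambda>a. sm a v)" by auto
  qed
  moreover have "v \<in> range (\<lambda>a. sm a v)" by (metis rangeI smult_one)
  ultimately show "lspan sm {v} \<subseteq> range (\<lambda>a. sm a v)" by (simp add: lspan_least)
  show "range (\<lambda>a. sm a v) \<subseteq> lspan sm {v}"
    using lspan_lsubspace lspan_superset lsubspace_smult by fastforce
qed

lemma lspan_pair: "lspan sm {x, y} = {sm a x + sm b y | a b. True}"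
proof
  let ?S = "{sm a x + sm b y | a b. True}"
  have "lsubspace sm ?S"
    unfolding lsubspace_def
  proof (intro conjI ballI allI)
    show "0 \<in> ?S" by (metis (mono_tags) add_0 mem_Collect_eq smult_zero_left)
  next
    fix u w assume "u \<in> ?S" "w \<in> ?S"
    then obtain a b c d where "u = sm a x + sm b y" "w = sm c x + sm d y" by auto
    then have "u + w = sm (a + c) x + sm (b + d) y" by (simp add: smult_add_left algebra_simps)
    then show "u + w \<in> ?S" by auto
  next
    fix c u assume "u \<in> ?S"
    then obtain a b where "u = sm a x + sm b y" by auto
    then have "sm c u = sm (c * a) x + sm (c * b) y" by (simp add: smult_add_right smult_assoc)
    then show "sm c u \<in> ?S" by auto
  qed
  moreover have "x = sm 1 x + sm 0 y" "y = sm 0 x + sm 1 y" by (simp_all add: smult_one)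
  then have "x \<in> ?S" "y \<in> ?S" by blast+
  ultimately show "lspan sm {x, y} \<subseteq> ?S" by (simp add: lspan_least)
  show "?S \<subseteq> lspan sm {x, y}"
    using lspan_lsubspace[of sm "{x, y}"] lspan_superset[of "{x, y}" sm]
    by (auto intro: lsubspace_add lsubspace_smult)
qed

lemma lspan_pair_exchange:
  assumes y: "y \<in> lspan sm {x, u}" and y_not: "y \<notin> lspan sm {x}"
  shows "lspan sm {x, y} = lspan sm {x, u}"
proof
  obtain a b where y_eq: "y = sm a x + sm b u" using y lspan_pair by auto
  have "b \<noteq> 0"
    using y_eq y_not lspan_singleton by auto
  then have "u = sm (- (inverse b * a)) x + sm (inverse b) y"
    by (simp add: y_eq smult_add_right smult_minus_left smult_inverse_cancel smult_assoc)
  then have "u \<in> lspan sm {x, y}" using lspan_pair by auto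
  then show "lspan sm {x, u} \<subseteq> lspan sm {x, y}"
    using lspan_superset[of "{x, y}" sm] by (simp add: lspan_least lspan_lsubspace)
  show "lspan sm {x, y} \<subseteq> lspan sm {x, u}"
    using y lspan_superset[of "{x, u}" sm] by (simp add: lspan_least lspan_lsubspace)
qed

lemma is_line_eq_lspan_pair:
  assumes L: "is_line sm L" and x: "x \<in> L" "x \<noteq> 0" and y: "y \<in> L" "y \<notin> lspan sm {x}"
  shows "L = lspan sm {x, y}"
proof -
  obtain u w where u: "u \<noteq> 0" and w: "w \<notin> lspan sm {u}" and L_eq: "L = lspan sm {u, w}"
    using L is_line_def by blast
  have "\<exists>z. L = lspan sm {x, z}"
  proof (cases "x \<in> lspan sm {w}")
    case False
    then have "lspan sm {w, x} = lspan sm {w, u}"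
      using lspan_pair_exchange[of x w u] x L_eq by (simp add: insert_commute)
    then show ?thesis using L_eq by (metis insert_commute)
  next
    case True
    then obtain c where c: "x = sm c w" using lspan_singleton by auto
    with x have "c \<noteq> 0" by auto
    have "x \<notin> lspan sm {u}"
    proof
      assume "x \<in> lspan sm {u}"
      then obtain d where "x = sm d u" using lspan_singleton by auto
      then have "w = sm (inverse c * d) u"
        using c smult_inverse_cancel[OF \<open>c \<noteq> 0\<close>, of w] by (simp add: smult_assoc)
      then show False using w lspan_singleton by auto
    qed
    then have "lspan sm {u, x} = lspan sm {u, w}"
      using lspan_pair_exchange[of x u w] x L_eq by simp
    then show ?thesis using L_eq by (metis insert_commute)
  qed
  then obtain z where "L = lspan sm {x, z}" by blast
  then show ?thesis using lspan_pair_exchange[of y x z] y by simp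
qed

lemma line_Int_eq_point:
  assumes L: "is_line sm L" and E: "lsubspace sm E" and not_sub: "\<not> L \<subseteq> E"
    and p: "p \<in> L" "p \<in> E" "p \<noteq> 0"
  shows "L \<inter> E = lspan sm {p}"
proof
  show "lspan sm {p} \<subseteq> L \<inter> E"
    using p E is_line_lsubspace[OF L] lspan_singleton_subset_iff by blast
  show "L \<inter> E \<subseteq> lspan sm {p}"
  proof
    fix q assume q: "q \<in> L \<inter> E"
    show "q \<in> lspan sm {p}"
    proof (rule ccontr)
      assume "q \<notin> lspan sm {p}"
      then have "L = lspan sm {p, q}" using is_line_eq_lspan_pair[OF L p(1,3)] q by blast
      also have "\<dots> \<subseteq> E" using lspan_least[OF E, of "{p, q}"] p(2) q by simp
      finally show False using not_sub by blast
    qed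
  qed
qed

lemma line_meeting_complements:
  assumes F: "lsubspace sm F" and G: "lsubspace sm G" and FG: "F \<inter> G = {0}"
    and M: "is_line sm M" "meets sm M F" "meets sm M G"
    and p: "p \<in> M" "p \<notin> F" "p \<notin> G"
  shows "\<exists>f\<in>F. \<exists>g\<in>G. p = f + g \<and> M = lspan sm {f, g}"
proof -
  have M_sub: "lsubspace sm M" using M(1) by (rule is_line_lsubspace)
  obtain f0 where f0: "f0 \<noteq> 0" "f0 \<in> M" "f0 \<in> F" using M meets_iff[OF M_sub F] by blast
  obtain g0 where g0: "g0 \<noteq> 0" "g0 \<in> M" "g0 \<in> G" using M meets_iff[OF M_sub G] by blast
  have "g0 \<notin> F" using g0 FG by blast
  then have "M = lspan sm {f0, g0}"
    using is_line_eq_lspan_pair[OF M(1) f0(2,1) g0(2)] not_in_lspan_singleton[OF F f0(3)] by blast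
  then obtain a b where p_eq: "p = sm a f0 + sm b g0" using p(1) lspan_pair by auto
  define f g where "f = sm a f0" and "g = sm b g0"
  have f: "f \<in> F" "f \<in> M" and g: "g \<in> G" "g \<in> M"
    unfolding f_def g_def using f0 g0 F G M_sub by (auto intro: lsubspace_smult)
  have "f \<noteq> 0" using p(3) g(1) p_eq unfolding f_def g_def by auto
  moreover have "g \<notin> F"
  proof
    assume "g \<in> F"
    then have "p \<in> F" using p_eq lsubspace_add[OF F f(1)] unfolding f_def g_def by simp
    with p(2) show False ..
  qed
  ultimately have "M = lspan sm {f, g}"
    using is_line_eq_lspan_pair[OF M(1) f(2)] g(2) not_in_lspan_singleton[OF F f(1)] by blast
  then show ?thesis using f(1) g(1) p_eq unfolding f_def g_def by blast
qed

lemma line_meeting_complements_unique: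
  assumes F: "lsubspace sm F" and G: "lsubspace sm G" and FG: "F \<inter> G = {0}"
    and M: "is_line sm M" "meets sm M F" "meets sm M G"
    and M': "is_line sm M'" "meets sm M' F" "meets sm M' G"
    and p: "p \<in> M" "p \<in> M'" "p \<notin> F" "p \<notin> G"
  shows "M = M'"
proof -
  obtain f g where fg: "f \<in> F" "g \<in> G" "p = f + g" "M = lspan sm {f, g}"
    using line_meeting_complements[OF F G FG M p(1,3,4)] by blast
  obtain f' g' where fg': "f' \<in> F" "g' \<in> G" "p = f' + g'" "M' = lspan sm {f', g'}"
    using line_meeting_complements[OF F G FG M' p(2,3,4)] by blast
  have "f = f' \<and> g = g'"
    using direct_sum_decomposition_unique[OF F G FG fg(1) fg'(1) fg(2) fg'(2)] fg(3) fg'(3) by simp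
  then show ?thesis using fg(4) fg'(4) by simp
qed

lemma line_meeting_complements_exists:
  assumes F: "lsubspace sm F" and G: "lsubspace sm G" and FG: "distant F G"
    and p: "p \<notin> F" "p \<notin> G"
  shows "\<exists>L. is_line sm L \<and> p \<in> L \<and> meets sm L F \<and> meets sm L G"
proof -
  obtain f g where fg: "f \<in> F" "g \<in> G" "p = f + g" using FG unfolding distant_def by blast
  have "f \<noteq> 0" using fg p by auto
  have "g \<notin> F" using fg p lsubspace_add[OF F fg(1)] by auto
  define L where "L = lspan sm {f, g}"
  have L: "is_line sm L"
    unfolding is_line_def L_def using \<open>f \<noteq> 0\<close> \<open>g \<notin> F\<close> not_in_lspan_singleton[OF F fg(1)] by blast
  have fg_L: "f \<in> L" "g \<in> L" unfolding L_def using lspan_superset[of "{f, g}" sm] by auto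
  have "p = sm 1 f + sm 1 g" using fg(3) by (simp add: smult_one)
  then have "p \<in> L" unfolding L_def lspan_pair by blast
  moreover have "meets sm L F"
    using meets_iff[OF is_line_lsubspace[OF L] F] fg_L(1) fg(1) \<open>f \<noteq> 0\<close> by blast
  moreover have "g \<noteq> 0" using fg p by auto
  then have "meets sm L G"
    using meets_iff[OF is_line_lsubspace[OF L] G] fg_L(2) fg(2) by blast
  ultimately show ?thesis using L by blast
qed

lemma directrix_Int_eq_point:
  assumes R: "partial_regulus sm R" "E \<in> R" and L: "directrix sm R L"
    and p: "p \<in> L" "p \<in> E" "p \<noteq> 0"
  shows "L \<inter> E = lspan sm {p}"
proof -
  obtain F where F: "F \<in> R" "F \<noteq> E" using partial_regulus_obtain_two_others[OF R] by metis
  have line: "is_line sm L" and "meets sm L F" using L F(1) unfolding directrix_def by auto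
  then obtain v where v: "v \<noteq> 0" "v \<in> L" "v \<in> F"
    using meets_iff[OF is_line_lsubspace[OF line] partial_regulus_lsubspace[OF R(1) F(1)]] by blast
  have "E \<inter> F = {0}" using partial_regulus_distant[OF R F(1)] F(2) unfolding distant_def by blast
  then have "v \<notin> E" using v by blast
  then show ?thesis
    using line_Int_eq_point[OF line partial_regulus_lsubspace[OF R] _ p] v(2) by blast
qed

lemma ex1_directrix_through:
  assumes R: "partial_regulus sm R" "E \<in> R" and p: "p \<in> E" "p \<noteq> 0"
  shows "\<exists>!L. directrix sm R L \<and> p \<in> L"
proof -
  obtain F G where FG: "F \<in> R" "G \<in> R" "F \<noteq> E" "G \<noteq> E" "F \<noteq> G"
    using partial_regulus_obtain_two_others[OF R] .
  have sub: "lsubspace sm E" "lsubspace sm F" "lsubspace sm G"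
    using partial_regulus_lsubspace[OF R(1)] R(2) FG(1,2) by auto
  have dist: "distant E F" "distant E G" "distant F G"
    using partial_regulus_distant[OF R(1)] R(2) FG by (metis (full_types))+
  then have "p \<notin> F" "p \<notin> G" and FG0: "F \<inter> G = {0}"
    using p unfolding distant_def by blast+
  have directrix_iff: "directrix sm R L \<longleftrightarrow> is_line sm L \<and> meets sm L E \<and> meets sm L F \<and> meets sm L G"
    for L using directrix_iff_meets_three[OF R FG(1,2)] FG(3-5) by metis
  have meets_E: "meets sm L E" if "is_line sm L" "p \<in> L" for L
    using meets_iff[OF is_line_lsubspace[OF that(1)] sub(1)] that(2) p by blast
  obtain L where "is_line sm L" "p \<in> L" "meets sm L F" "meets sm L G"
    using line_meeting_complements_exists[OF sub(2,3) dist(3) \<open>p \<notin> F\<close> \<open>p \<notin> G\<close>] by blast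
  then have "directrix sm R L \<and> p \<in> L" using directrix_iff meets_E by blast
  moreover have "L' = L" if "directrix sm R L'" "p \<in> L'" for L'
    using line_meeting_complements_unique[OF sub(2,3) FG0, of L' L] that calculation
      directrix_iff \<open>p \<notin> F\<close> \<open>p \<notin> G\<close> by blast
  ultimately show ?thesis by blast
qed

lemma directrix_meets:
  assumes "E \<in> R" "lsubspace sm E" "directrix sm R L"
  obtains p where "p \<noteq> 0" "p \<in> L" "p \<in> E"
proof -
  have "is_line sm L" "meets sm L E" using assms unfolding directrix_def by auto
  then show ?thesis using that meets_iff[OF is_line_lsubspace assms(2)] by blast
qed

lemma bij_betw_directrix_Int:
  assumes R: "partial_regulus sm R" "E \<in> R"
  shows "bij_betw (\<lambda>L. L \<inter> E) {L. directrix sm R L} {P. is_point sm P \<and> P \<subseteq> E}"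
proof -
  have E: "lsubspace sm E" using partial_regulus_lsubspace[OF R] .
  have "inj_on (\<lambda>L. L \<inter> E) {L. directrix sm R L}"
  proof (rule inj_onI)
    fix L L' assume L: "L \<in> {L. directrix sm R L}" "L' \<in> {L. directrix sm R L}"
      and LE: "L \<inter> E = L' \<inter> E"
    obtain p where p: "p \<noteq> 0" "p \<in> L" "p \<in> E" using directrix_meets[OF R(2) E] L(1) by blast
    with LE have "p \<in> L'" by blast
    with p L show "L = L'" using ex1_directrix_through[OF R p(3,1)] by auto
  qed
  moreover have "(\<lambda>L. L \<inter> E) ` {L. directrix sm R L} = {P. is_point sm P \<and> P \<subseteq> E}"
  proof (intro equalityI subsetI)
    fix P assume "P \<in> (\<lambda>L. L \<inter> E) ` {L. directrix sm R L}"
    then obtain L where L: "directrix sm R L" and P: "P = L \<inter> E" by blast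
    then obtain p where "p \<noteq> 0" "p \<in> L" "p \<in> E" using directrix_meets[OF R(2) E] by blast
    then show "P \<in> {P. is_point sm P \<and> P \<subseteq> E}"
      using directrix_Int_eq_point[OF R L] P is_point_subset_iff[OF E] by auto
  next
    fix P assume "P \<in> {P. is_point sm P \<and> P \<subseteq> E}"
    then obtain p where p: "p \<noteq> 0" "p \<in> E" "P = lspan sm {p}"
      using is_point_subset_iff[OF E, of P] by auto
    obtain L where L: "directrix sm R L" "p \<in> L" using ex1_directrix_through[OF R p(2,1)] by auto
    then have "P = L \<inter> E" using directrix_Int_eq_point[OF R L(1,2) p(2,1)] p(3) by simp
    then show "P \<in> (\<lambda>L. L \<inter> E) ` {L. directrix sm R L}" using L(1) by blast
  qed
  ultimately show ?thesis unfolding bij_betw_def ..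
qed

lemma ex1_directrix_through_point:
  assumes R: "partial_regulus sm R" "E \<in> R" and P: "is_point sm P" "P \<subseteq> E"
  shows "\<exists>!L. directrix sm R L \<and> P \<subseteq> L"
proof -
  obtain p where p: "p \<noteq> 0" "p \<in> E" "P = lspan sm {p}"
    using P is_point_subset_iff[OF partial_regulus_lsubspace[OF R]] by blast
  have "directrix sm R L \<and> P \<subseteq> L \<longleftrightarrow> directrix sm R L \<and> p \<in> L" for L
    using p(3) lspan_singleton_subset_iff[OF is_line_lsubspace] unfolding directrix_def by blast
  then show ?thesis using ex1_directrix_through[OF R p(2,1)] by simp
qed

end

theorem lemma4p3:
  fixes sm :: "'k::division_ring \<Rightarrow> 'v::ab_group_add \<Rightarrow> 'v"
    and R :: "'v set set" and E :: "'v set"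
  assumes "left_vs sm"
    and "dim_gt_2 sm"
    and "GG sm \<noteq> {}"
    and "partial_regulus sm R"
    and "E \<in> R"
  shows "bij_betw (\<lambda>L. L \<inter> E) {L. directrix sm R L} {P. is_point sm P \<and> P \<subseteq> E}
    \<and> (\<forall>P. is_point sm P \<and> P \<subseteq> E \<longrightarrow> (\<exists>!L. directrix sm R L \<and> P \<subseteq> L))"
proof -
  interpret left_vector_space sm by unfold_locales (rule assms(1))
  show ?thesis
    using bij_betw_directrix_Int[OF assms(4,5)] ex1_directrix_through_point[OF assms(4,5)] by blast
qed

end
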